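(* For any $w>0$ and $\rho\ge 2w$, there exists a partition of a disk of radius $\rho$ in $\mathbb{R}^2$ into convex cells such that each cell has diameter at most $8w$ and area at least $w^2/8$. *)

theory Defs
  imports "HOL-Analysis.Analysis"
begin

definition convex_cell_partition :: "(real^2) set set \<Rightarrow> (real^2) set \<Rightarrow> bool" where
  "convex_cell_partition P S \<longleftrightarrow>
     finite P \<and> \<Union>P = S \<and>
     (\<forall>C\<in>P. C \<noteq> {} \<and> convex C \<and> compact C) \<and>
     (\<forall>C\<in>P. \<forall>D\<in>P. C \<noteq> D \<longrightarrow> interior C \<inter> interior D = {})"

end

theory Submission
  imports Defs
begin

text \<open>Cover the disk by finitely many balls of radius \<open>2w\<close> and take a maximal \<open>2w\<close>-separated
  subset \<open>X\<close> of their centres; every point of the disk is then within \<open>4w\<close> of \<open>X\<close>. The Voronoi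
  cells of \<open>X\<close>, cut down to the disk, are convex (intersections of half-planes with the disk),
  have disjoint interiors (two cells meet only on a bisector line), and lie in the balls of
  radius \<open>4w\<close> around their centres, whence diameter at most \<open>8w\<close>. Separation puts the ball of
  radius \<open>w\<close> around each centre \<open>x\<close> into its cell, and this ball contains a disk of radius
  \<open>w/2\<close> that stays inside the big disk, so each cell has area at least \<open>\<pi>w\<^sup>2/4 \<ge> w\<^sup>2/8\<close>.\<close>

lemma compact_separated_net:
  fixes D :: "'a::metric_space set"
  assumes "compact D" and "r > 0"
  obtains X where "finite X" "X \<subseteq> D"
    and "\<And>x y. x \<in> X \<Longrightarrow> y \<in> X \<Longrightarrow> x \<noteq> y \<Longrightarrow> r \<le> dist x y"
    and "\<And>p. p \<in> D \<Longrightarrow> \<exists>x\<in>X. dist p x < 2 * r"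
proof -
  obtain Y where Y: "Y \<subseteq> D" "finite Y" "D \<subseteq> (\<Union>y\<in>Y. ball y r)"
    using compactE_image[OF \<open>compact D\<close>, of D "\<lambda>y. ball y r"] \<open>r > 0\<close> by force
  define F where "F = {S. S \<subseteq> Y \<and> (\<forall>x\<in>S. \<forall>y\<in>S. x \<noteq> y \<longrightarrow> r \<le> dist x y)}"
  have "finite F"
    unfolding F_def using Y(2) by (auto intro: finite_subset[of _ "Pow Y"])
  moreover have "{} \<in> F"
    unfolding F_def by auto
  ultimately obtain X where "X \<in> F" and X_maximal: "\<And>S. S \<in> F \<Longrightarrow> X \<subseteq> S \<Longrightarrow> X = S"
    using finite_has_maximal[of F] by blast
  then have XY: "X \<subseteq> Y" and X_sep: "\<And>x y. x \<in> X \<Longrightarrow> y \<in> X \<Longrightarrow> x \<noteq> y \<Longrightarrow> r \<le> dist x y"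
    unfolding F_def by auto
  have Y_near_X: "\<exists>x\<in>X. dist y x < r" if "y \<in> Y" for y
  proof (rule ccontr)
    assume "\<not> (\<exists>x\<in>X. dist y x < r)"
    then have "insert y X \<in> F" and "y \<notin> X"
      using \<open>X \<in> F\<close> \<open>y \<in> Y\<close> \<open>r > 0\<close> unfolding F_def by (force simp: dist_commute)+
    then show False
      using X_maximal[of "insert y X"] by blast
  qed
  have X_net: "\<exists>x\<in>X. dist p x < 2 * r" if "p \<in> D" for p
  proof -
    obtain y where "y \<in> Y" "dist p y < r"
      using Y(3) \<open>p \<in> D\<close> by (force simp: dist_commute)
    moreover obtain x where "x \<in> X" "dist y x < r"
      using Y_near_X[OF \<open>y \<in> Y\<close>] by blast
    moreover have "dist p x \<le> dist p y + dist y x"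
      by (rule dist_triangle)
    ultimately show ?thesis
      by (intro bexI[of _ x]) simp_all
  qed
  have "finite X" "X \<subseteq> D"
    using XY Y finite_subset by blast+
  then show thesis
    using X_sep X_net by (rule that)
qed

definition voronoi_cell :: "'a::metric_space set \<Rightarrow> 'a \<Rightarrow> 'a set" where
  "voronoi_cell X x = {p. \<forall>y\<in>X. dist p x \<le> dist p y}"

lemma dist_le_dist_iff_inner:
  fixes p x y :: "'a::real_inner"
  shows "dist p x \<le> dist p y \<longleftrightarrow> inner (2 *\<^sub>R (y - x)) p \<le> (norm y)\<^sup>2 - (norm x)\<^sup>2"
proof -
  have sq: "(dist p z)\<^sup>2 = (norm p)\<^sup>2 - 2 * inner p z + (norm z)\<^sup>2" for z
    by (simp add: dist_norm power2_norm_eq_inner inner_diff_left inner_diff_right inner_commute)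
  have "dist p x \<le> dist p y \<longleftrightarrow> (dist p x)\<^sup>2 \<le> (dist p y)\<^sup>2"
    by (simp add: power_mono_iff)
  then show ?thesis
    unfolding sq by (auto simp: inner_diff_left inner_commute algebra_simps)
qed

lemma voronoi_cell_eq_halfspaces:
  fixes X :: "'a::real_inner set"
  shows "voronoi_cell X x = (\<Inter>y\<in>X. {p. inner (2 *\<^sub>R (y - x)) p \<le> (norm y)\<^sup>2 - (norm x)\<^sup>2})"
  unfolding voronoi_cell_def dist_le_dist_iff_inner by auto

lemma convex_voronoi_cell: "convex (voronoi_cell (X :: 'a::real_inner set) x)"
  unfolding voronoi_cell_eq_halfspaces by (intro convex_INT ballI convex_halfspace_le)

lemma closed_voronoi_cell: "closed (voronoi_cell (X :: 'a::real_inner set) x)"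
  unfolding voronoi_cell_eq_halfspaces by (intro closed_INT ballI closed_halfspace_le)

lemma interior_equidistant_empty:
  fixes x y :: "'a::euclidean_space"
  assumes "x \<noteq> y"
  shows "interior {p. dist p x = dist p y} = {}"
proof -
  have "dist p x = dist p y \<longleftrightarrow> inner (2 *\<^sub>R (y - x)) p = (norm y)\<^sup>2 - (norm x)\<^sup>2" for p
  proof -
    have "inner (2 *\<^sub>R (x - y)) p = - inner (2 *\<^sub>R (y - x)) p"
      by (simp add: inner_diff_left)
    then show ?thesis
      unfolding order_eq_iff[of "dist p x"] dist_le_dist_iff_inner by linarith
  qed
  then have "{p. dist p x = dist p y} = {p. inner (2 *\<^sub>R (y - x)) p = (norm y)\<^sup>2 - (norm x)\<^sup>2}"
    by blast
  moreover have "interior {p. inner (2 *\<^sub>R (y - x)) p = (norm y)\<^sup>2 - (norm x)\<^sup>2} = {}"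
    using assms by (intro interior_hyperplane) simp
  ultimately show ?thesis
    by (simp only:)
qed

lemma interior_voronoi_cells_disjoint:
  fixes X :: "'a::euclidean_space set"
  assumes "x \<in> X" "y \<in> X" "x \<noteq> y"
  shows "interior (voronoi_cell X x) \<inter> interior (voronoi_cell X y) = {}"
proof -
  have "voronoi_cell X x \<inter> voronoi_cell X y \<subseteq> {p. dist p x = dist p y}"
    using assms unfolding voronoi_cell_def by (auto intro: antisym)
  then have "interior (voronoi_cell X x \<inter> voronoi_cell X y) = {}"
    using interior_mono interior_equidistant_empty[OF \<open>x \<noteq> y\<close>] by blast
  then show ?thesis
    by (simp add: interior_Int)
qed

lemma Union_voronoi_cells:
  assumes "finite X" "X \<noteq> {}"
  shows "(\<Union>x\<in>X. voronoi_cell X x) = UNIV"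
proof -
  have "\<exists>x\<in>X. p \<in> voronoi_cell X x" for p
    using arg_min_if_finite[OF assms, of "dist p"] arg_min_least[OF assms, of _ "dist p"]
    unfolding voronoi_cell_def by blast
  then show ?thesis
    by blast
qed

lemma ball_subset_voronoi_cell:
  assumes "x \<in> X" and "\<And>y. y \<in> X \<Longrightarrow> y \<noteq> x \<Longrightarrow> 2 * r \<le> dist x y"
  shows "ball x r \<subseteq> voronoi_cell X x"
proof
  fix p assume "p \<in> ball x r"
  then have "dist p x < r"
    by (simp add: dist_commute)
  moreover have "2 * r \<le> dist p x + dist p y" if "y \<in> X" "y \<noteq> x" for y
    using assms(2)[OF that] dist_triangle[of x y p] by (simp add: dist_commute)
  ultimately show "p \<in> voronoi_cell X x"
    unfolding voronoi_cell_def by force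
qed

lemma voronoi_cell_Int_subset_cball:
  assumes "\<And>p. p \<in> D \<Longrightarrow> \<exists>y\<in>X. dist p y < R"
  shows "voronoi_cell X x \<inter> D \<subseteq> cball x R"
proof
  fix p assume p: "p \<in> voronoi_cell X x \<inter> D"
  then obtain y where "y \<in> X" "dist p y < R"
    using assms by blast
  with p show "p \<in> cball x R"
    unfolding voronoi_cell_def by (force simp: dist_commute)
qed

lemma convex_cell_partition_voronoi:
  fixes X :: "(real^2) set"
  assumes "finite X" "X \<noteq> {}" "X \<subseteq> D" "convex D" "compact D"
  shows "convex_cell_partition ((\<lambda>x. voronoi_cell X x \<inter> D) ` X) D"
  unfolding convex_cell_partition_def
proof (intro conjI ballI impI)
  show "finite ((\<lambda>x. voronoi_cell X x \<inter> D) ` X)"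
    using assms(1) by simp
  show "\<Union> ((\<lambda>x. voronoi_cell X x \<inter> D) ` X) = D"
    using Union_voronoi_cells[OF assms(1,2)] by blast
next
  fix C assume "C \<in> (\<lambda>x. voronoi_cell X x \<inter> D) ` X"
  then obtain x where "x \<in> X" "C = voronoi_cell X x \<inter> D"
    by blast
  moreover have "x \<in> voronoi_cell X x"
    unfolding voronoi_cell_def by simp
  ultimately show "C \<noteq> {}" "convex C" "compact C"
    using assms(3-5)
    by (auto intro: convex_Int convex_voronoi_cell closed_Int_compact closed_voronoi_cell)
next
  fix C C' assume "C \<in> (\<lambda>x. voronoi_cell X x \<inter> D) ` X" "C' \<in> (\<lambda>x. voronoi_cell X x \<inter> D) ` X"
    "C \<noteq> C'"
  then obtain x y where "x \<in> X" "y \<in> X" "x \<noteq> y"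
    "C \<subseteq> voronoi_cell X x" "C' \<subseteq> voronoi_cell X y"
    by blast
  then show "interior C \<inter> interior C' = {}"
    using interior_voronoi_cells_disjoint[of x X y] interior_mono by blast
qed

lemma ball_subset_cball_near:
  fixes c x :: "'a::real_normed_vector"
  assumes "x \<in> cball c \<rho>" and "0 < s" "s \<le> \<rho>"
  obtains z where "ball z s \<subseteq> cball c \<rho>" and "dist z x \<le> s"
proof
  define z where "z = c + (1 - s / \<rho>) *\<^sub>R (x - c)"
  have "0 \<le> 1 - s / \<rho>" "dist c x \<le> \<rho>"
    using assms by auto
  then have "dist c z \<le> (1 - s / \<rho>) * \<rho>"
    by (simp add: z_def dist_norm norm_minus_commute mult_left_mono)
  also have "\<dots> = \<rho> - s"
    using assms by (simp add: field_simps)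
  finally have "dist c z \<le> \<rho> - s" .
  then show "ball z s \<subseteq> cball c \<rho>"
  proof (intro subsetI)
    fix p assume "p \<in> ball z s"
    then show "p \<in> cball c \<rho>"
      using \<open>dist c z \<le> \<rho> - s\<close> dist_triangle[of c p z] by simp
  qed
  have "x - z = (s / \<rho>) *\<^sub>R (x - c)"
    by (simp add: z_def algebra_simps)
  then have "dist z x = s / \<rho> * dist c x"
    using assms by (simp add: dist_norm norm_minus_commute)
  also have "\<dots> \<le> s"
    using assms \<open>dist c x \<le> \<rho>\<close> by (simp add: field_simps mult_left_mono)
  finally show "dist z x \<le> s" .
qed

lemma measure_ge_ball_area:
  fixes C :: "(real^2) set"
  assumes "ball z r \<subseteq> C" "compact C" "r \<ge> 0"
  shows "r\<^sup>2 * pi \<le> measure lebesgue C"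
proof -
  have "measure lebesgue (ball z r) = r\<^sup>2 * pi"
    using circle_area[OF \<open>r \<ge> 0\<close>] by simp
  moreover have "measure lebesgue (ball z r) \<le> measure lebesgue C"
    using assms by (intro measure_mono_fmeasurable lmeasurable_compact) auto
  ultimately show ?thesis
    by simp
qed

lemma diameter_voronoi_cell_Int_le:
  fixes X D :: "'a::euclidean_space set"
  assumes "\<And>p. p \<in> D \<Longrightarrow> \<exists>y\<in>X. dist p y < R" "R \<ge> 0"
  shows "diameter (voronoi_cell X x \<inter> D) \<le> 2 * R"
  using diameter_subset[OF voronoi_cell_Int_subset_cball[OF assms(1)]] assms(2) by simp

lemma measure_voronoi_cell_Int_cball_ge:
  fixes X :: "(real^2) set"
  assumes "x \<in> X" "X \<subseteq> cball c \<rho>" and "0 < w" "w \<le> 2 * \<rho>"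
    and "\<And>y. y \<in> X \<Longrightarrow> y \<noteq> x \<Longrightarrow> 2 * w \<le> dist x y"
  shows "(w/2)\<^sup>2 * pi \<le> measure lebesgue (voronoi_cell X x \<inter> cball c \<rho>)"
proof -
  have "x \<in> cball c \<rho>" "0 < w/2" "w/2 \<le> \<rho>"
    using assms(1-4) by auto
  then obtain z where z: "ball z (w/2) \<subseteq> cball c \<rho>" "dist z x \<le> w/2"
    by (rule ball_subset_cball_near) blast
  have "ball z (w/2) \<subseteq> ball x w"
    using z(2) by (simp add: ball_subset_ball_iff dist_commute)
  also have "\<dots> \<subseteq> voronoi_cell X x"
    using assms(1,5) by (rule ball_subset_voronoi_cell)
  finally show ?thesis
    using z(1) \<open>0 < w\<close>
    by (intro measure_ge_ball_area closed_Int_compact closed_voronoi_cell) auto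
qed

theorem lemmaC1:
  fixes w \<rho> :: real and c :: "real^2"
  assumes "w > 0" and "\<rho> \<ge> 2 * w"
  shows "\<exists>P. convex_cell_partition P (cball c \<rho>) \<and>
             (\<forall>C\<in>P. diameter C \<le> 8 * w \<and> measure lebesgue C \<ge> w\<^sup>2 / 8)"
proof -
  have "compact (cball c \<rho>)" "2 * w > 0"
    using \<open>w > 0\<close> by simp_all
  then obtain X where X: "finite X" "X \<subseteq> cball c \<rho>"
    and X_sep: "\<And>x y. x \<in> X \<Longrightarrow> y \<in> X \<Longrightarrow> x \<noteq> y \<Longrightarrow> 2 * w \<le> dist x y"
    and X_net: "\<And>p. p \<in> cball c \<rho> \<Longrightarrow> \<exists>x\<in>X. dist p x < 2 * (2 * w)"
    by (rule compact_separated_net) blast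
  have "X \<noteq> {}"
    using X_net[of c] assms by auto
  define cell where "cell x = voronoi_cell X x \<inter> cball c \<rho>" for x
  have "diameter (cell x) \<le> 8 * w" for x
    using diameter_voronoi_cell_Int_le[where D = "cball c \<rho>" and x = x, OF X_net] \<open>w > 0\<close>
    by (simp add: cell_def)
  moreover have "w\<^sup>2 / 8 \<le> measure lebesgue (cell x)" if "x \<in> X" for x
  proof -
    have "w\<^sup>2 * 1 \<le> w\<^sup>2 * (2 * pi)"
      using pi_ge_two by (intro mult_left_mono) auto
    then have "w\<^sup>2 / 8 \<le> (w/2)\<^sup>2 * pi"
      by (simp add: power_divide)
    also have "\<dots> \<le> measure lebesgue (cell x)"
      unfolding cell_def using that X(2) assms
      by (intro measure_voronoi_cell_Int_cball_ge) (auto simp: X_sep dist_commute)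
    finally show ?thesis .
  qed
  moreover have "convex_cell_partition (cell ` X) (cball c \<rho>)"
    unfolding cell_def using X \<open>X \<noteq> {}\<close> by (intro convex_cell_partition_voronoi) simp_all
  ultimately show ?thesis
    by blast
qed

end
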